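(* Let $k\in\mathbb{F}$ be nonzero and for $j\in\tfrac12\mathbb{N}^+$ let $D^{(j)}=\mathrm{diag}(1,k,k^2,\dots,k^{2j})$. Then for all $j_1,j_2\in\tfrac12\mathbb{N}^+$, \[ \big(D^{(j_1)}\otimes D^{(j_2)}\big)R^{(j_1,j_2)}(t)=R^{(j_1,j_2)}(t)\big(D^{(j_1)}\otimes D^{(j_2)}\big). \]
   Context: $\mathbb{F}$ is a field of characteristic zero in which every element has a square root; $q\in\mathbb{F}$ nonzero, not a root of unity, with fixed square root $q^{1/2}$ ($q^{k/2}:=(q^{1/2})^{k}$ for integers); other $(\cdot)^{1/2}$ are fixed square roots in $\mathbb{F}$. $[n]_q=\frac{q^n-q^{-n}}{q-q^{-1}}$, $c(t)=t-t^{-1}$, $\tfrac12\mathbb{N}^+=\{\tfrac12,1,\tfrac32,\dots\}$, $t$ an indeterminate, $\otimes$ Kronecker product. Leg notation: for factors $\mathbb{F}^{n_1}\otimes\mathbb{F}^{n_2}\otimes\mathbb{F}^{n_3}$, $X_{12}=X\otimes I_{n_3}$, $X_{23}=I_{n_1}\otimes X$, $X_{13}=P(X\otimes I_{n_2})P$ with $P$ the flip of factors 2,3; for non-square $Y$, $Y_{12}=Y\otimes I_{n_3}$, $Y_{23}=I_{n_1}\otimes Y$. For $j\in\tfrac12\mathbb{N}^+$: $\mathcal{E}^{(j+\frac12)}$ is $(4j+2)\times(2j+2)$ with only nonzero entries $\mathcal{E}_{(a,a)}=\big(\frac{[2j+2-a]_q}{[2j+1]_q}\big)^{1/2}$, $\mathcal{E}_{(a+2j+1,a+1)}=\big(\frac{[a]_q}{[2j+1]_q}\big)^{1/2}$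 ($1\le a\le 2j+1$); $\mathcal{F}^{(j+\frac12)}$ is $(2j+2)\times(4j+2)$ with only nonzero entries $\mathcal{F}_{(a,a)}=\frac{([2j+2-a]_q[2j+1]_q)^{1/2}}{[2j+2-a]_q+[a-1]_q}$, $\mathcal{F}_{(a+1,a+2j+1)}=\frac{([a]_q[2j+1]_q)^{1/2}}{[2j+1-a]_q+[a]_q}$ ($1\le a\le 2j+1$). $R^{(\frac12,\frac12)}(t)$ is the $4\times4$ matrix with rows $(c(qt),0,0,0),(0,c(t),c(q),0),(0,c(q),c(t),0),(0,0,0,c(qt))$; recursively $R^{(\frac12,j+\frac12)}(t)=\mathcal{F}^{(j+\frac12)}_{23}R^{(\frac12,j)}_{13}(q^{-1/2}t)R^{(\frac12,\frac12)}_{12}(q^{j}t)\mathcal{E}^{(j+\frac12)}_{23}$ (factor sizes $2,2,2j+1$) and $R^{(j_1+\frac12,j_2)}(t)=\mathcal{F}^{(j_1+\frac12)}_{12}R^{(\frac12,j_2)}_{13}(q^{-j_1}t)R^{(j_1,j_2)}_{23}(q^{1/2}t)\mathcal{E}^{(j_1+\frac12)}_{12}$ (factor sizes $2,2j_1+1,2j_2+1$). *)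

theory Defs
  imports "Jordan_Normal_Form.Matrix"
begin

text \<open>Spin j in 1/2 N^+ is encoded by n = 2j (a positive natural); the
  spin-j space has dimension n+1. Indices are 0-based.\<close>

definition qnum :: "'a::field \<Rightarrow> nat \<Rightarrow> 'a" where
  "qnum q n = (q ^ n - inverse (q ^ n)) / (q - inverse q)"

definition cfun :: "'a::field \<Rightarrow> 'a" where
  "cfun t = t - inverse t"

definition kron :: "'a::semiring_0 mat \<Rightarrow> 'a mat \<Rightarrow> 'a mat" where
  "kron A B = mat (dim_row A * dim_row B) (dim_col A * dim_col B)
     (\<lambda>(i,j). A $$ (i div dim_row B, j div dim_col B) * B $$ (i mod dim_row B, j mod dim_col B))"

definition leg12 :: "nat \<Rightarrow> 'a::semiring_1 mat \<Rightarrow> 'a mat" where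
  "leg12 n3 X = kron X (1\<^sub>m n3)"

definition leg23 :: "nat \<Rightarrow> 'a::semiring_1 mat \<Rightarrow> 'a mat" where
  "leg23 n1 X = kron (1\<^sub>m n1) X"

text \<open>X_13 = P (X \<otimes> I_n2) P with P the flip of factors 2,3, written entrywise:
  it acts as X on factors 1,3 and as the identity on factor 2.\<close>
definition leg13 :: "nat \<Rightarrow> nat \<Rightarrow> nat \<Rightarrow> 'a::semiring_1 mat \<Rightarrow> 'a mat" where
  "leg13 n1 n2 n3 X = mat (n1*n2*n3) (n1*n2*n3) (\<lambda>(i,j).
     if (i div n3) mod n2 = (j div n3) mod n2
     then X $$ ((i div (n2*n3)) * n3 + i mod n3, (j div (n2*n3)) * n3 + j mod n3)
     else 0)"

text \<open>E^{(j+1/2)} for n = 2j: a (2n+2) x (n+2) matrix; sr is the fixed square-root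
  function.  1-based entries (a,a) and (a+n+1,a+1), 1 <= a <= n+1.\<close>
definition Emat :: "('a::field \<Rightarrow> 'a) \<Rightarrow> 'a \<Rightarrow> nat \<Rightarrow> 'a mat" where
  "Emat sr q n = mat (2*n+2) (n+2) (\<lambda>(i,j).
     if i \<le> n \<and> j = i then sr (qnum q (n+1-i) / qnum q (n+1))
     else if n+1 \<le> i \<and> i \<le> 2*n+1 \<and> j = i - n then sr (qnum q (i-n) / qnum q (n+1))
     else 0)"

definition Fmat :: "('a::field \<Rightarrow> 'a) \<Rightarrow> 'a \<Rightarrow> nat \<Rightarrow> 'a mat" where
  "Fmat sr q n = mat (n+2) (2*n+2) (\<lambda>(i,j).
     if j \<le> n \<and> i = j then
        sr (qnum q (n+1-j) * qnum q (n+1)) / (qnum q (n+1-j) + qnum q j)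
     else if n+1 \<le> j \<and> j \<le> 2*n+1 \<and> i = j - n then
        sr (qnum q (j-n) * qnum q (n+1)) / (qnum q (2*n+1-j) + qnum q (j-n))
     else 0)"

definition R0 :: "'a::field \<Rightarrow> 'a \<Rightarrow> 'a mat" where
  "R0 q t = mat 4 4 (\<lambda>(i,j).
     if (i = 0 \<and> j = 0) \<or> (i = 3 \<and> j = 3) then cfun (q*t)
     else if (i = 1 \<and> j = 1) \<or> (i = 2 \<and> j = 2) then cfun t
     else if (i = 1 \<and> j = 2) \<or> (i = 2 \<and> j = 1) then cfun q
     else 0)"

text \<open>Rmat sr q qh n1 n2 t = R^{(n1/2, n2/2)}(t); qh is the fixed square root of q.\<close>
fun Rmat :: "('a::field \<Rightarrow> 'a) \<Rightarrow> 'a \<Rightarrow> 'a \<Rightarrow> nat \<Rightarrow> nat \<Rightarrow> 'a \<Rightarrow> 'a mat" where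
  "Rmat sr q qh 0 n2 t = 0\<^sub>m 0 0"
| "Rmat sr q qh (Suc 0) 0 t = 0\<^sub>m 0 0"
| "Rmat sr q qh (Suc 0) (Suc 0) t = R0 q t"
| "Rmat sr q qh (Suc 0) (Suc (Suc n)) t =
     leg23 2 (Fmat sr q (Suc n))
     * leg13 2 2 (Suc n + 1) (Rmat sr q qh (Suc 0) (Suc n) (inverse qh * t))
     * leg12 (Suc n + 1) (Rmat sr q qh (Suc 0) (Suc 0) (qh ^ (Suc n) * t))
     * leg23 2 (Emat sr q (Suc n))"
| "Rmat sr q qh (Suc (Suc m)) n2 t =
     leg12 (n2 + 1) (Fmat sr q (Suc m))
     * leg13 2 (Suc m + 1) (n2 + 1) (Rmat sr q qh (Suc 0) n2 (inverse (qh ^ (Suc m)) * t))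
     * leg23 2 (Rmat sr q qh (Suc m) n2 (qh * t))
     * leg12 (n2 + 1) (Emat sr q (Suc m))"

definition Dmat :: "'a::field \<Rightarrow> nat \<Rightarrow> 'a mat" where
  "Dmat k n = mat (n+1) (n+1) (\<lambda>(i,j). if i = j then k ^ i else 0)"

end

theory Submission
  imports Defs
begin

text \<open>Give the basis vector e_a \<otimes> e_b the weight a + b. The matrices R(1/2,1/2), E and F
  only have nonzero entries between basis vectors of equal weight, and this sparsity pattern
  survives matrix products, Kronecker products and the leg embeddings. By induction along
  the recursion every R(j1,j2) conserves the weight as well, while D(j1) \<otimes> D(j2) is the
  diagonal matrix with entry k^weight at each basis vector, and such a matrix commutes with
  every weight-conserving one.\<close>

definition weight_preserving :: "(nat \<Rightarrow> nat) \<Rightarrow> (nat \<Rightarrow> nat) \<Rightarrow> 'a::zero mat \<Rightarrow> bool" where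
  "weight_preserving wr wc M \<longleftrightarrow>
     (\<forall>i<dim_row M. \<forall>j<dim_col M. M $$ (i,j) \<noteq> 0 \<longrightarrow> wr i = wc j)"

lemma weight_preserving_mult:
  fixes A B :: "'a::semiring_0 mat"
  assumes "dim_col A = dim_row B" "weight_preserving wr wm A" "weight_preserving wm wc B"
  shows "weight_preserving wr wc (A * B)"
  unfolding weight_preserving_def
proof (intro allI impI)
  fix i j assume i: "i < dim_row (A * B)" and j: "j < dim_col (A * B)"
    and nz: "(A * B) $$ (i,j) \<noteq> 0"
  have "(A * B) $$ (i,j) = (\<Sum>l<dim_row B. A $$ (i,l) * B $$ (l,j))"
    using i j assms(1) by (simp add: scalar_prod_def atLeast0LessThan)
  with nz obtain l where l: "l < dim_row B" "A $$ (i,l) * B $$ (l,j) \<noteq> 0"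
    by (metis (no_types, lifting) lessThan_iff sum.neutral)
  have "wr i = wm l" "wm l = wc j"
    using assms(2,3) i j l assms(1) unfolding weight_preserving_def by (auto dest: mult_not_zero)
  then show "wr i = wc j" by simp
qed

lemma weight_preserving_one: "weight_preserving w w (1\<^sub>m n)"
  unfolding weight_preserving_def by auto

lemma dim_kron [simp]:
  "dim_row (kron A B) = dim_row A * dim_row B"
  "dim_col (kron A B) = dim_col A * dim_col B"
  by (simp_all add: kron_def)

lemma index_kron:
  "i < dim_row A * dim_row B \<Longrightarrow> j < dim_col A * dim_col B \<Longrightarrow>
   kron A B $$ (i,j) =
     A $$ (i div dim_row B, j div dim_col B) * B $$ (i mod dim_row B, j mod dim_col B)"
  by (simp add: kron_def)

lemma less_mult_imp_div_mod_less:
  assumes "i < a * (b::nat)"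
  shows "i div b < a" "i mod b < b"
proof -
  from assms have "b > 0" by (cases b) auto
  with assms show "i div b < a" "i mod b < b" by (simp_all add: less_mult_imp_div_less)
qed

lemma weight_preserving_kron:
  assumes "weight_preserving wr wc A" "weight_preserving wr' wc' B"
  shows "weight_preserving (\<lambda>i. wr (i div dim_row B) + wr' (i mod dim_row B))
           (\<lambda>j. wc (j div dim_col B) + wc' (j mod dim_col B)) (kron A B)"
  unfolding weight_preserving_def
proof (intro allI impI)
  fix i j assume "i < dim_row (kron A B)" "j < dim_col (kron A B)"
    and nz: "kron A B $$ (i,j) \<noteq> 0"
  then have i: "i < dim_row A * dim_row B" and j: "j < dim_col A * dim_col B" by auto
  with nz show "wr (i div dim_row B) + wr' (i mod dim_row B)
      = wc (j div dim_col B) + wc' (j mod dim_col B)"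
    using assms less_mult_imp_div_mod_less[OF i] less_mult_imp_div_mod_less[OF j]
    unfolding weight_preserving_def index_kron[OF i j] by (metis mult_not_zero)
qed

lemma weight_preserving_leg12:
  assumes "weight_preserving wr wc X"
    and "\<And>i. wr' i = wr (i div n) + i mod n" "\<And>j. wc' j = wc (j div n) + j mod n"
  shows "weight_preserving wr' wc' (leg12 n X)"
proof -
  have "wr' = (\<lambda>i. wr (i div n) + i mod n)" "wc' = (\<lambda>j. wc (j div n) + j mod n)"
    using assms(2,3) by auto
  then show ?thesis
    unfolding leg12_def using weight_preserving_kron[OF assms(1) weight_preserving_one] by simp
qed

lemma weight_preserving_leg23:
  assumes "weight_preserving wr wc X" "dim_row X = r" "dim_col X = c"
    and "\<And>i. wr' i = i div r + wr (i mod r)" "\<And>j. wc' j = j div c + wc (j mod c)"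
  shows "weight_preserving wr' wc' (leg23 n X)"
proof -
  have "wr' = (\<lambda>i. i div r + wr (i mod r))" "wc' = (\<lambda>j. j div c + wc (j mod c))"
    using assms(4,5) by auto
  then show ?thesis
    unfolding leg23_def using weight_preserving_kron[OF weight_preserving_one assms(1)] assms(2,3)
    by simp
qed

text \<open>An index i of a Kronecker product of factors of sizes m and n stands for the basis
  vector e_(i div n) \<otimes> e_(i mod n); weight3 n2 n3 is the analogue for three factors of sizes
  _, n2 and n3.\<close>

definition weight2 :: "nat \<Rightarrow> nat \<Rightarrow> nat" where
  "weight2 n i = i div n + i mod n"

definition weight3 :: "nat \<Rightarrow> nat \<Rightarrow> nat \<Rightarrow> nat" where
  "weight3 n2 n3 i = i div (n2 * n3) + (i div n3) mod n2 + i mod n3"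

lemma weight3_eq_first_weight2: "weight3 n2 n3 i = i div (n2 * n3) + weight2 n3 (i mod (n2 * n3))"
proof -
  have "i mod (n2 * n3) = n3 * (i div n3 mod n2) + i mod n3"
    by (metis mod_mult2_eq mult.commute)
  then show ?thesis
    by (cases "n3 = 0") (simp_all add: weight3_def weight2_def)
qed

lemma weight3_eq_weight2_last: "weight3 n2 n3 i = weight2 n2 (i div n3) + i mod n3"
proof -
  have "i div (n2 * n3) = i div n3 div n2"
    by (metis div_mult2_eq mult.commute)
  then show ?thesis
    by (simp add: weight3_def weight2_def)
qed

lemma mult_add_less_mult:
  assumes "a < n" "b < (m::nat)"
  shows "a * m + b < n * m"
proof -
  have "a * m + b < (a + 1) * m" using assms(2) by simp
  also have "\<dots> \<le> n * m" using assms(1) by (intro mult_le_mono1) simp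
  finally show ?thesis .
qed

lemma weight_preserving_leg13:
  assumes X: "weight_preserving (weight2 n3) (weight2 n3) X" "X \<in> carrier_mat (n1 * n3) (n1 * n3)"
  shows "weight_preserving (weight3 n2 n3) (weight3 n2 n3) (leg13 n1 n2 n3 X)"
  unfolding weight_preserving_def
proof (intro allI impI)
  fix i j assume "i < dim_row (leg13 n1 n2 n3 X)" "j < dim_col (leg13 n1 n2 n3 X)"
    and nz: "leg13 n1 n2 n3 X $$ (i,j) \<noteq> 0"
  then have i: "i < n1 * (n2 * n3)" and j: "j < n1 * (n2 * n3)"
    by (simp_all add: leg13_def mult.assoc)
  define i' where "i' = i div (n2 * n3) * n3 + i mod n3"
  define j' where "j' = j div (n2 * n3) * n3 + j mod n3"
  have mid: "(i div n3) mod n2 = (j div n3) mod n2" and "X $$ (i', j') \<noteq> 0"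
    using nz i j by (auto simp: leg13_def i'_def j'_def mult.assoc split: if_splits)
  moreover have "n3 > 0" using i by (cases n3) auto
  moreover have "i div (n2 * n3) < n1" "j div (n2 * n3) < n1"
    using i j by (simp_all add: less_mult_imp_div_less)
  ultimately have "weight2 n3 i' = weight2 n3 j'"
    using X unfolding weight_preserving_def by (simp add: i'_def j'_def mult_add_less_mult)
  with \<open>n3 > 0\<close> show "weight3 n2 n3 i = weight3 n2 n3 j"
    using mid by (simp add: weight2_def weight3_def i'_def j'_def)
qed

lemma dim_Fmat [simp]: "dim_row (Fmat sr q n) = n + 2" "dim_col (Fmat sr q n) = 2 * n + 2"
  by (simp_all add: Fmat_def)

lemma dim_Emat [simp]: "dim_row (Emat sr q n) = 2 * n + 2" "dim_col (Emat sr q n) = n + 2"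
  by (simp_all add: Emat_def)

lemma dim_R0 [simp]: "dim_row (R0 q t) = 4" "dim_col (R0 q t) = 4"
  by (simp_all add: R0_def)

lemma dim_leg12 [simp]: "dim_row (leg12 n X) = dim_row X * n" "dim_col (leg12 n X) = dim_col X * n"
  by (simp_all add: leg12_def)

lemma dim_leg23 [simp]: "dim_row (leg23 n X) = n * dim_row X" "dim_col (leg23 n X) = n * dim_col X"
  by (simp_all add: leg23_def)

lemma dim_leg13 [simp]:
  "dim_row (leg13 n1 n2 n3 X) = n1 * n2 * n3" "dim_col (leg13 n1 n2 n3 X) = n1 * n2 * n3"
  by (simp_all add: leg13_def)

lemma weight_preserving_Fmat: "weight_preserving id (weight2 (n + 1)) (Fmat sr q n)"
  unfolding weight_preserving_def
proof (intro allI impI)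
  fix i j assume "i < dim_row (Fmat sr q n)" "j < dim_col (Fmat sr q n)"
    and nz: "Fmat sr q n $$ (i,j) \<noteq> 0"
  then have i: "i < n + 2" and j: "j < 2 * n + 2" by simp_all
  show "id i = weight2 (n + 1) j"
  proof (cases "j \<le> n")
    case True
    then show ?thesis using nz i j by (auto simp: Fmat_def weight2_def split: if_splits)
  next
    case False
    then have "j div (n + 1) = 1" "j mod (n + 1) = j - (n + 1)" using j by (auto simp: div_if mod_if)
    then show ?thesis using nz i j False by (auto simp: Fmat_def weight2_def split: if_splits)
  qed
qed

lemma weight_preserving_Emat: "weight_preserving (weight2 (n + 1)) id (Emat sr q n)"
  unfolding weight_preserving_def
proof (intro allI impI)
  fix i j assume "i < dim_row (Emat sr q n)" "j < dim_col (Emat sr q n)"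
    and nz: "Emat sr q n $$ (i,j) \<noteq> 0"
  then have i: "i < 2 * n + 2" and j: "j < n + 2" by simp_all
  show "weight2 (n + 1) i = id j"
  proof (cases "i \<le> n")
    case True
    then show ?thesis using nz i j by (auto simp: Emat_def weight2_def split: if_splits)
  next
    case False
    then have "i div (n + 1) = 1" "i mod (n + 1) = i - (n + 1)" using i by (auto simp: div_if mod_if)
    then show ?thesis using nz i j False by (auto simp: Emat_def weight2_def split: if_splits)
  qed
qed

lemma weight_preserving_R0: "weight_preserving (weight2 2) (weight2 2) (R0 q t)"
  unfolding weight_preserving_def
proof (intro allI impI)
  fix i j assume "i < dim_row (R0 q t)" "j < dim_col (R0 q t)" and nz: "R0 q t $$ (i,j) \<noteq> 0"
  then have "i \<in> {0,1,2,3}" "j \<in> {0,1,2,3}" by auto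
  with nz show "weight2 2 i = weight2 2 j" by (auto simp: R0_def weight2_def)
qed

lemma Rmat_carrier:
  assumes "1 \<le> n1" "1 \<le> n2"
  shows "Rmat sr q qh n1 n2 t \<in> carrier_mat ((n1 + 1) * (n2 + 1)) ((n1 + 1) * (n2 + 1))"
  using assms by (cases "(sr, q, qh, n1, n2, t)" rule: Rmat.cases) auto

lemma weight_preserving_Rmat:
  "1 \<le> n1 \<Longrightarrow> 1 \<le> n2 \<Longrightarrow>
   weight_preserving (weight2 (n2 + 1)) (weight2 (n2 + 1)) (Rmat sr q qh n1 n2 t)"
proof (induction sr q qh n1 n2 t rule: Rmat.induct)
  case (3 sr q qh t)
  then show ?case using weight_preserving_R0 by (simp add: numeral_2_eq_2)
next
  case (4 sr q qh n t)
  let ?W = "weight2 (Suc (Suc n) + 1)" and ?M = "weight3 2 (Suc n + 1)"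
  let ?R = "Rmat sr q qh (Suc 0) (Suc n) (inverse qh * t)"
  have IH: "weight_preserving (weight2 (Suc n + 1)) (weight2 (Suc n + 1)) ?R"
    and R_dim: "?R \<in> carrier_mat (2 * (Suc n + 1)) (2 * (Suc n + 1))"
    using "4.IH"(1) Rmat_carrier[of "Suc 0" "Suc n"] by (simp_all add: mult_2)
  have F: "weight_preserving ?W ?M (leg23 2 (Fmat sr q (Suc n)))"
    by (rule weight_preserving_leg23[OF weight_preserving_Fmat])
      (simp_all add: weight2_def weight3_eq_first_weight2)
  have R1: "weight_preserving ?M ?M (leg13 2 2 (Suc n + 1) ?R)"
    by (rule weight_preserving_leg13[OF IH R_dim])
  have R2: "weight_preserving ?M ?M (leg12 (Suc n + 1) (R0 q (qh ^ Suc n * t)))"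
    by (rule weight_preserving_leg12[OF weight_preserving_R0])
      (simp_all add: weight3_eq_weight2_last)
  have E: "weight_preserving ?M ?W (leg23 2 (Emat sr q (Suc n)))"
    by (rule weight_preserving_leg23[OF weight_preserving_Emat])
      (simp_all add: weight2_def weight3_eq_first_weight2)
  show ?case
    unfolding Rmat.simps(3,4)
    by (rule weight_preserving_mult[OF _ weight_preserving_mult[OF _ weight_preserving_mult[OF _ F R1] R2] E])
      simp_all
next
  case (5 sr q qh m n2 t)
  let ?W = "weight2 (n2 + 1)" and ?M = "weight3 (Suc m + 1) (n2 + 1)"
  let ?R = "Rmat sr q qh (Suc 0) n2 (inverse (qh ^ Suc m) * t)"
    and ?R' = "Rmat sr q qh (Suc m) n2 (qh * t)"
  have IH: "weight_preserving ?W ?W ?R" "weight_preserving ?W ?W ?R'"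
    using "5.IH" "5.prems" by simp_all
  have R_dim: "?R \<in> carrier_mat (2 * (n2 + 1)) (2 * (n2 + 1))"
    and R'_dim: "?R' \<in> carrier_mat ((Suc m + 1) * (n2 + 1)) ((Suc m + 1) * (n2 + 1))"
    using Rmat_carrier[of "Suc 0" n2] Rmat_carrier[of "Suc m" n2] "5.prems"
    by (simp_all add: mult_2)
  have F: "weight_preserving ?W ?M (leg12 (n2 + 1) (Fmat sr q (Suc m)))"
    by (rule weight_preserving_leg12[OF weight_preserving_Fmat])
      (simp_all add: weight2_def weight3_eq_weight2_last)
  have R1: "weight_preserving ?M ?M (leg13 2 (Suc m + 1) (n2 + 1) ?R)"
    by (rule weight_preserving_leg13[OF IH(1) R_dim])
  have R2: "weight_preserving ?M ?M (leg23 2 ?R')"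
    by (rule weight_preserving_leg23[OF IH(2) carrier_matD[OF R'_dim]])
      (simp_all add: weight3_eq_first_weight2)
  have E: "weight_preserving ?M ?W (leg12 (n2 + 1) (Emat sr q (Suc m)))"
    by (rule weight_preserving_leg12[OF weight_preserving_Emat])
      (simp_all add: weight2_def weight3_eq_weight2_last)
  show ?case
    unfolding Rmat.simps(5)
    by (rule weight_preserving_mult[OF _ weight_preserving_mult[OF _ weight_preserving_mult[OF _ F R1] R2] E])
      (simp_all add: carrier_matD[OF R'_dim])
qed auto

lemma kron_mat_diag:
  "kron (mat_diag m f) (mat_diag n g) = mat_diag (m * n) (\<lambda>i. f (i div n) * g (i mod n))"
proof (rule eq_matI)
  fix i j assume "i < dim_row (mat_diag (m * n) (\<lambda>i. f (i div n) * g (i mod n)))"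
    "j < dim_col (mat_diag (m * n) (\<lambda>i. f (i div n) * g (i mod n)))"
  then have i: "i < m * n" and j: "j < m * n" by (simp_all add: mat_diag_def)
  have "i = j \<longleftrightarrow> i div n = j div n \<and> i mod n = j mod n"
    by (metis div_mult_mod_eq)
  with i j show "kron (mat_diag m f) (mat_diag n g) $$ (i, j)
      = mat_diag (m * n) (\<lambda>i. f (i div n) * g (i mod n)) $$ (i, j)"
    using less_mult_imp_div_mod_less[OF i] less_mult_imp_div_mod_less[OF j]
    by (auto simp: index_kron mat_diag_def)
qed (simp_all add: mat_diag_def)

lemma Dmat_eq_mat_diag: "Dmat k n = mat_diag (n + 1) (\<lambda>i. k ^ i)"
  unfolding Dmat_def mat_diag_def by (rule eq_matI) auto

lemma mat_diag_weight_commute: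
  fixes M :: "'a::comm_semiring_0 mat"
  assumes M: "M \<in> carrier_mat n n" "weight_preserving w w M"
  shows "mat_diag n (\<lambda>i. f (w i)) * M = M * mat_diag n (\<lambda>i. f (w i))"
proof -
  have "f (w i) * M $$ (i, j) = M $$ (i, j) * f (w j)" if "i < n" "j < n" for i j
    using M that unfolding weight_preserving_def
    by (cases "M $$ (i, j) = 0") (auto simp: mult.commute)
  then show ?thesis
    unfolding mat_diag_mult_left[OF M(1)] mat_diag_mult_right[OF M(1)] by (intro cong_mat) auto
qed

theorem lemmaB2:
  fixes q qh k t :: "'a::field_char_0" and sr :: "'a \<Rightarrow> 'a" and n1 n2 :: nat
  assumes sqrt_fun: "\<forall>x. sr x * sr x = x"
    and qh: "qh * qh = q"
    and q_nz: "q \<noteq> 0"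
    and q_not_root: "\<forall>m::nat. m > 0 \<longrightarrow> q ^ m \<noteq> 1"
    and k_nz: "k \<noteq> 0"
    and t_nz: "t \<noteq> 0"
    and n1: "n1 \<ge> 1" and n2: "n2 \<ge> 1"
  shows "kron (Dmat k n1) (Dmat k n2) * Rmat sr q qh n1 n2 t
       = Rmat sr q qh n1 n2 t * kron (Dmat k n1) (Dmat k n2)"
proof -
  have "kron (Dmat k n1) (Dmat k n2)
      = mat_diag ((n1 + 1) * (n2 + 1)) (\<lambda>i. k ^ weight2 (n2 + 1) i)"
    by (simp add: Dmat_eq_mat_diag kron_mat_diag weight2_def power_add)
  then show ?thesis
    using mat_diag_weight_commute[OF Rmat_carrier weight_preserving_Rmat, OF n1 n2 n1 n2] by simp
qed

end
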